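(* For each $\lambda\ge0$, each $j,k\in\{1,\dots,N\}$ and each $i\in\{1,\dots,|K_j|\}$, $$\det(I-H(\lambda))=\det(I-D(\lambda)),\qquad \det\big((I-H(\lambda))_{j,k}\big)=\det\big((I-D(\lambda))_{j,k}\big),$$ $$(-1)^{L(j)+i+k}\det\big((I-H(\lambda))_{L(j)+i,k}\big)=(-1)^{j+k}m_{j,L(j)+i}\,G_j^*(\lambda)\det\big((I-D(\lambda))_{j,k}\big),$$ where for a square matrix $A$, $A_{r,s}$ denotes the matrix obtained by deleting the $r$-th row and $s$-th column.
   Context: CBP setting. Let $S$ be a finite or countable set and $\eta$ an irreducible continuous-time Markov chain on $S$ with conservative infinitesimal matrix $Q=(q(x,y))$ ($q(x,y)\ge0$ for $x\ne y$, $q(x,x)\in(-\infty,0)$, row sums $0$). Fix distinct $W=\{w_1,\dots,w_N\}\subset S$, and for $k=1,\dots,N$ numbers $\beta_k>0$, $\alpha_k\in[0,1)$, and generating functions $f_k$ of nonnegative integer random variables with $f_k'(1)<\infty$. Hitting times under taboo: for $x,y\in S$, $H\subset S$, ${}_H\overline\tau_{x,y}$ is the time spent by $\eta$ started at $x$, after leaving $x$, until first hitting $y$ if $H$ is not visited before; otherwise $\infty$. ${}_H\overline F_{x,y}(t)$ is its improper distribution function, ${}_H\overline F_{x,y}(\infty)$ its limit, ${}_H\overline F^*_{x,y}(\lambda)=\int_{0-}^\infty e^{-\lambda t}d\,{}_H\overline F_{x,y}(t)$. $W_k=W\setminus\{w_k\}$. $D(\lambda)=(d_{i,j}(\lambda))_{i,j=1}^N$,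 $d_{i,j}(\lambda)=\delta_{i,j}\alpha_if_i'(1)G_i^*(\lambda)+(1-\alpha_i)G_i^*(\lambda){}_{W_j}\overline F^*_{w_i,w_j}(\lambda)$, $G_i^*(\lambda)=\beta_i/(\lambda+\beta_i)$. $K_j=\{k:{}_{W_k}\overline F_{w_j,w_k}(\infty)-{}_{W_k}\overline F_{w_j,w_k}(0)>0\}=\{k(1,j)<\dots<k(|K_j|,j)\}$, $L=N+\sum_j|K_j|$, $L(j)=N+\sum_{l<j}|K_l|$, $T_{i,j}(t)={}_{W_{k(i,j)}}\overline F_{w_j,w_{k(i,j)}}(t)-{}_{W_{k(i,j)}}\overline F_{w_j,w_{k(i,j)}}(0)$. The $L\times L$ matrix $M=(m_{k,l})$: $m_{k,l}=\delta_{k,l}\alpha_kf_k'(1)+(1-\alpha_k){}_{W_l}\overline F_{w_k,w_l}(0)$ for $k,l\le N$; $m_{j,L(j)+i}=(1-\alpha_j)T_{i,j}(\infty)$; $m_{L(j)+i,k(i,j)}=1$; all other entries $0$. $G_j(t)=1-e^{-\beta_jt}$ ($j\le N$), $G_{L(j)+i}(t)=T_{i,j}(t)/T_{i,j}(\infty)$, $G_r^*$ their Laplace–Stieltjes transforms, and $H(\lambda)=(G_r^*(\lambda)m_{r,s})_{r,s=1}^L$. *)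

theory Defs
  imports "HOL-Probability.Probability_Mass_Function" "Jordan_Normal_Form.Determinant"
begin

text \<open>Indices of W are 1..N.
  Fb i j t stands for the improper distribution function of the taboo hitting
  time with taboo set W_j from w_i to w_j (t real; Fb i j t = 0 for t < 0).\<close>

definition improper_df :: "(real \<Rightarrow> real) \<Rightarrow> bool" where
  "improper_df F \<longleftrightarrow> mono F \<and> (\<forall>t<0. F t = 0) \<and> (\<forall>t. F t \<le> 1)
     \<and> (\<forall>t. continuous (at_right t) F)"

definition F_inf :: "(real \<Rightarrow> real) \<Rightarrow> real" where
  "F_inf F = Lim at_top F"

text \<open>Laplace-Stieltjes transform: integral from 0- to infinity of exp(-lam t) dF(t).\<close>
definition LST :: "(real \<Rightarrow> real) \<Rightarrow> real \<Rightarrow> real" where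
  "LST F lam = (\<integral>t. exp (- lam * t) \<partial>(interval_measure F))"

definition Gexp_star :: "(nat \<Rightarrow> real) \<Rightarrow> nat \<Rightarrow> real \<Rightarrow> real" where
  "Gexp_star \<beta> i lam = \<beta> i / (lam + \<beta> i)"

text \<open>f_k'(1) = mean of the offspring distribution p k.\<close>
definition fd :: "(nat \<Rightarrow> nat pmf) \<Rightarrow> nat \<Rightarrow> real" where
  "fd p k = measure_pmf.expectation (p k) real"

definition Dent :: "(nat \<Rightarrow> real) \<Rightarrow> (nat \<Rightarrow> real) \<Rightarrow> (nat \<Rightarrow> nat pmf)
    \<Rightarrow> (nat \<Rightarrow> nat \<Rightarrow> real \<Rightarrow> real) \<Rightarrow> real \<Rightarrow> nat \<Rightarrow> nat \<Rightarrow> real" where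
  "Dent \<alpha> \<beta> p Fb lam i j =
     (if i = j then \<alpha> i * fd p i * Gexp_star \<beta> i lam else 0)
     + (1 - \<alpha> i) * Gexp_star \<beta> i lam * LST (Fb i j) lam"

definition Kset :: "nat \<Rightarrow> (nat \<Rightarrow> nat \<Rightarrow> real \<Rightarrow> real) \<Rightarrow> nat \<Rightarrow> nat set" where
  "Kset N Fb j = {k \<in> {1..N}. F_inf (Fb j k) - Fb j k 0 > 0}"

definition kidx :: "nat \<Rightarrow> (nat \<Rightarrow> nat \<Rightarrow> real \<Rightarrow> real) \<Rightarrow> nat \<Rightarrow> nat \<Rightarrow> nat" where
  "kidx N Fb i j = sorted_list_of_set (Kset N Fb j) ! (i - 1)"

definition Lidx :: "nat \<Rightarrow> (nat \<Rightarrow> nat \<Rightarrow> real \<Rightarrow> real) \<Rightarrow> nat \<Rightarrow> nat" where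
  "Lidx N Fb j = N + (\<Sum>l\<in>{1..<j}. card (Kset N Fb l))"

definition Ltot :: "nat \<Rightarrow> (nat \<Rightarrow> nat \<Rightarrow> real \<Rightarrow> real) \<Rightarrow> nat" where
  "Ltot N Fb = N + (\<Sum>l\<in>{1..N}. card (Kset N Fb l))"

definition Tfun :: "nat \<Rightarrow> (nat \<Rightarrow> nat \<Rightarrow> real \<Rightarrow> real) \<Rightarrow> nat \<Rightarrow> nat \<Rightarrow> real \<Rightarrow> real" where
  "Tfun N Fb i j t = Fb j (kidx N Fb i j) t - Fb j (kidx N Fb i j) 0"

definition Tinf :: "nat \<Rightarrow> (nat \<Rightarrow> nat \<Rightarrow> real \<Rightarrow> real) \<Rightarrow> nat \<Rightarrow> nat \<Rightarrow> real" where
  "Tinf N Fb i j = F_inf (Fb j (kidx N Fb i j)) - Fb j (kidx N Fb i j) 0"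

definition Gfun :: "nat \<Rightarrow> (nat \<Rightarrow> nat \<Rightarrow> real \<Rightarrow> real) \<Rightarrow> nat \<Rightarrow> nat \<Rightarrow> real \<Rightarrow> real" where
  "Gfun N Fb i j t = (if t < 0 then 0 else Tfun N Fb i j t / Tinf N Fb i j)"

definition isL :: "nat \<Rightarrow> (nat \<Rightarrow> nat \<Rightarrow> real \<Rightarrow> real) \<Rightarrow> nat \<Rightarrow> nat \<Rightarrow> nat \<Rightarrow> bool" where
  "isL N Fb r j i \<longleftrightarrow> j \<in> {1..N} \<and> i \<in> {1..card (Kset N Fb j)} \<and> r = Lidx N Fb j + i"

definition Ment :: "nat \<Rightarrow> (nat \<Rightarrow> real) \<Rightarrow> (nat \<Rightarrow> nat pmf)
    \<Rightarrow> (nat \<Rightarrow> nat \<Rightarrow> real \<Rightarrow> real) \<Rightarrow> nat \<Rightarrow> nat \<Rightarrow> real" where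
  "Ment N \<alpha> p Fb r s =
    (if r \<in> {1..N} \<and> s \<in> {1..N} then
        (if r = s then \<alpha> r * fd p r else 0) + (1 - \<alpha> r) * Fb r s 0
     else if r \<in> {1..N} \<and> (\<exists>i. isL N Fb s r i) then
        (1 - \<alpha> r) * Tinf N Fb (s - Lidx N Fb r) r
     else if (\<exists>j i. isL N Fb r j i \<and> s = kidx N Fb i j) then 1
     else 0)"

definition Gstar :: "nat \<Rightarrow> (nat \<Rightarrow> real) \<Rightarrow> (nat \<Rightarrow> nat \<Rightarrow> real \<Rightarrow> real) \<Rightarrow> nat \<Rightarrow> real \<Rightarrow> real" where
  "Gstar N \<beta> Fb r lam =
    (if r \<in> {1..N} then Gexp_star \<beta> r lam
     else (let (j, i) = (SOME (j, i). isL N Fb r j i) in LST (Gfun N Fb i j) lam))"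

text \<open>I - D(lam) as an N x N matrix (0-based storage of 1-based entries).\<close>
definition IminusD :: "nat \<Rightarrow> (nat \<Rightarrow> real) \<Rightarrow> (nat \<Rightarrow> real) \<Rightarrow> (nat \<Rightarrow> nat pmf)
    \<Rightarrow> (nat \<Rightarrow> nat \<Rightarrow> real \<Rightarrow> real) \<Rightarrow> real \<Rightarrow> real mat" where
  "IminusD N \<alpha> \<beta> p Fb lam =
     mat N N (\<lambda>(r, s). (if r = s then 1 else 0) - Dent \<alpha> \<beta> p Fb lam (r + 1) (s + 1))"

definition IminusH :: "nat \<Rightarrow> (nat \<Rightarrow> real) \<Rightarrow> (nat \<Rightarrow> real) \<Rightarrow> (nat \<Rightarrow> nat pmf)
    \<Rightarrow> (nat \<Rightarrow> nat \<Rightarrow> real \<Rightarrow> real) \<Rightarrow> real \<Rightarrow> real mat" where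
  "IminusH N \<alpha> \<beta> p Fb lam =
     mat (Ltot N Fb) (Ltot N Fb) (\<lambda>(r, s). (if r = s then 1 else 0)
        - Gstar N \<beta> Fb (r + 1) lam * Ment N \<alpha> p Fb (r + 1) (s + 1))"

end

theory Submission
  imports Defs "HOL-Probability.Distribution_Functions"
begin

text \<open>Order the indices of I - H(lam) as the N original states followed by the auxiliary
  ones. M has no entries between auxiliary states, so the lower right block of I - H(lam) is
  the identity; then det (I - H(lam)) is the determinant of the Schur complement of that block,
  and the same holds for the minors at original positions. The Schur complement is I - D(lam):
  the only path w_j \<rightarrow> L(j)+i \<rightarrow> w_k through the auxiliary states has weight
  (1 - alpha_j) T_{i,j}(\<infinity>) G*_{L(j)+i}(lam), which is the Laplace-Stieltjes transform of
  F_{w_j,w_k} with its atom F_{w_j,w_k}(0) at 0 removed, and that atom sits in m_{j,k}. For a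
  minor at an auxiliary row, column L(j)+i of I - H(lam) is a unit vector apart from the entry
  -G*_j(lam) m_{j,L(j)+i} in row j, and the vanishing alien cofactor expansion along it gives the
  third identity.\<close>

lemma det_four_block_mat_lower_right_one:
  fixes A :: "'a :: idom mat"
  assumes A: "A \<in> carrier_mat n n" and B: "B \<in> carrier_mat n m" and C: "C \<in> carrier_mat m n"
  shows "det (four_block_mat A B C (1\<^sub>m m)) = det (A - B * C)"
proof -
  have BC: "B * C \<in> carrier_mat n n" using B C by simp
  have S: "A - B * C \<in> carrier_mat n n" using BC by (rule minus_carrier_mat)
  have cancel: "A - D + D = A" if "D \<in> carrier_mat n n" for D
    using A that by (intro eq_matI) auto
  have "four_block_mat (1\<^sub>m n) B (0\<^sub>m m n) (1\<^sub>m m)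
        * four_block_mat (A - B * C) (0\<^sub>m n m) C (1\<^sub>m m)
      = four_block_mat (A - B * C + B * C) B C (1\<^sub>m m)"
    by (subst mult_four_block_mat[OF one_carrier_mat B zero_carrier_mat one_carrier_mat
          S zero_carrier_mat C one_carrier_mat])
      (use S B C in auto)
  then have factor: "four_block_mat A B C (1\<^sub>m m)
      = four_block_mat (1\<^sub>m n) B (0\<^sub>m m n) (1\<^sub>m m)
        * four_block_mat (A - B * C) (0\<^sub>m n m) C (1\<^sub>m m)"
    using cancel[OF BC] by simp
  have "det (four_block_mat (1\<^sub>m n) B (0\<^sub>m m n) (1\<^sub>m m)) = 1"
    by (subst det_four_block_mat_lower_left_zero[OF one_carrier_mat B refl one_carrier_mat]) simp
  moreover have "det (four_block_mat (A - B * C) (0\<^sub>m n m) C (1\<^sub>m m)) = det (A - B * C)"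
    by (subst det_four_block_mat_upper_right_zero[OF S refl C one_carrier_mat]) simp
  ultimately show ?thesis
    unfolding factor using S B C by (subst det_mult[of _ "n + m"]) auto
qed

definition schur_compl :: "'a :: comm_ring_1 mat \<Rightarrow> nat \<Rightarrow> 'a mat" where
  "schur_compl X n =
     mat n n (\<lambda>(r, s). X $$ (r, s) - (\<Sum>t\<in>{n..<dim_row X}. X $$ (r, t) * X $$ (t, s)))"

lemma det_schur_compl:
  fixes X :: "'a :: idom mat"
  assumes X: "X \<in> carrier_mat d d" and n: "n \<le> d"
    and one: "\<And>r s. n \<le> r \<Longrightarrow> r < d \<Longrightarrow> n \<le> s \<Longrightarrow> s < d
      \<Longrightarrow> X $$ (r, s) = (if r = s then 1 else 0)"
  shows "det X = det (schur_compl X n)"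
proof -
  define m where "m = d - n"
  have d: "d = n + m" using n by (simp add: m_def)
  define A where "A = mat n n (\<lambda>(r, s). X $$ (r, s))"
  define B where "B = mat n m (\<lambda>(r, s). X $$ (r, n + s))"
  define C where "C = mat m n (\<lambda>(r, s). X $$ (n + r, s))"
  have blocks: "X = four_block_mat A B C (1\<^sub>m m)"
  proof (rule eq_matI)
    fix r s assume "r < dim_row (four_block_mat A B C (1\<^sub>m m))"
      "s < dim_col (four_block_mat A B C (1\<^sub>m m))"
    then show "X $$ (r, s) = four_block_mat A B C (1\<^sub>m m) $$ (r, s)"
      using one[of r s] by (auto simp: A_def B_def C_def d)
  qed (use X in \<open>auto simp: A_def B_def C_def d\<close>)
  have "A - B * C = schur_compl X n"
  proof (rule eq_matI)
    fix r s assume "r < dim_row (schur_compl X n)" "s < dim_col (schur_compl X n)"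
    then have r: "r < n" and s: "s < n" by (auto simp: schur_compl_def)
    have "(B * C) $$ (r, s) = (\<Sum>t<m. X $$ (r, n + t) * X $$ (n + t, s))"
      using r s by (simp add: B_def C_def scalar_prod_def lessThan_atLeast0)
    also have "\<dots> = (\<Sum>t\<in>{n..<n + m}. X $$ (r, t) * X $$ (t, s))"
      using sum.shift_bounds_nat_ivl[of "\<lambda>t. X $$ (r, t) * X $$ (t, s)" 0 n m]
      by (simp add: lessThan_atLeast0 add.commute)
    finally show "(A - B * C) $$ (r, s) = schur_compl X n $$ (r, s)"
      using r s X by (simp add: A_def B_def C_def schur_compl_def d)
  qed (auto simp: A_def B_def C_def schur_compl_def)
  then show ?thesis
    unfolding blocks
    by (metis det_four_block_mat_lower_right_one mat_carrier A_def B_def C_def)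
qed

lemma schur_compl_mat_delete:
  assumes X: "X \<in> carrier_mat d d" and n: "n \<le> d" and a: "a < n" and b: "b < n"
  shows "schur_compl (mat_delete X a b) (n - 1) = mat_delete (schur_compl X n) a b"
proof (rule eq_matI)
  fix r s assume "r < dim_row (mat_delete (schur_compl X n) a b)"
    "s < dim_col (mat_delete (schur_compl X n) a b)"
  then have r: "r < n - 1" and s: "s < n - 1" by (auto simp: schur_compl_def)
  define r' where "r' = (if r < a then r else Suc r)"
  define s' where "s' = (if s < b then s else Suc s)"
  have r': "r' < n" and s': "s' < n" using r s by (auto simp: r'_def s'_def)
  have "(\<Sum>t\<in>{n - 1..<d - 1}. mat_delete X a b $$ (r, t) * mat_delete X a b $$ (t, s))
      = (\<Sum>t\<in>{n - 1..<d - 1}. X $$ (r', Suc t) * X $$ (Suc t, s'))"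
    using X a b r s by (intro sum.cong) (auto simp: mat_delete_def r'_def s'_def)
  also have "\<dots> = (\<Sum>t\<in>{n..<d}. X $$ (r', t) * X $$ (t, s'))"
    using a n sum.shift_bounds_Suc_ivl[of "\<lambda>t. X $$ (r', t) * X $$ (t, s')" "n - 1" "d - 1"]
    by simp
  finally show "schur_compl (mat_delete X a b) (n - 1) $$ (r, s)
      = mat_delete (schur_compl X n) a b $$ (r, s)"
    using X n r s r' s' by (simp add: schur_compl_def mat_delete_def r'_def s'_def)
qed (use a in \<open>auto simp: schur_compl_def\<close>)

lemma cofactor_schur_compl:
  fixes X :: "'a :: idom mat"
  assumes X: "X \<in> carrier_mat d d" and n: "n \<le> d"
    and one: "\<And>r s. n \<le> r \<Longrightarrow> r < d \<Longrightarrow> n \<le> s \<Longrightarrow> s < d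
      \<Longrightarrow> X $$ (r, s) = (if r = s then 1 else 0)"
    and a: "a < n" and b: "b < n"
  shows "cofactor X a b = cofactor (schur_compl X n) a b"
proof -
  have "mat_delete X a b \<in> carrier_mat (d - 1) (d - 1)"
    using X by (rule mat_delete_carrier)
  moreover have "mat_delete X a b $$ (r, s) = (if r = s then 1 else 0)"
    if "n - 1 \<le> r" "r < d - 1" "n - 1 \<le> s" "s < d - 1" for r s
    using X a b that one[of "Suc r" "Suc s"] by (auto simp: mat_delete_def)
  ultimately have "det (mat_delete X a b) = det (schur_compl (mat_delete X a b) (n - 1))"
    using n by (intro det_schur_compl) auto
  then show ?thesis
    unfolding cofactor_def schur_compl_mat_delete[OF X n a b] by simp
qed

lemma cofactor_unit_col:
  fixes X :: "'a :: comm_ring_1 mat"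
  assumes X: "X \<in> carrier_mat n n" and a: "a < n" and s: "s < n" and k: "k < n"
    and sk: "s \<noteq> k" and as: "a \<noteq> s"
    and col: "\<And>r. r < n \<Longrightarrow> r \<noteq> a \<Longrightarrow> X $$ (r, s) = (if r = s then 1 else 0)"
  shows "cofactor X s k = - X $$ (a, s) * cofactor X a k"
proof -
  have "0 = (adj_mat X * X) $$ (k, s)"
    using adj_mat(3)[OF X] X k s sk by simp
  also have "\<dots> = (\<Sum>r<n. cofactor X r k * X $$ (r, s))"
    using X k s by (simp add: adj_mat_def scalar_prod_def lessThan_atLeast0)
  also have "\<dots> = (\<Sum>r<n. (if r = a then cofactor X a k * X $$ (a, s) else 0)
      + (if r = s then cofactor X s k else 0))"
    using as col by (intro sum.cong) auto
  also have "\<dots> = cofactor X a k * X $$ (a, s) + cofactor X s k"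
    using a s by (simp add: sum.distrib)
  finally show ?thesis by (simp add: algebra_simps eq_neg_iff_add_eq_0)
qed

lemma cofactor_pred_pred:
  assumes "1 \<le> i" and "1 \<le> j"
  shows "cofactor A (i - 1) (j - 1) = (-1) ^ (i + j) * det (mat_delete A (i - 1) (j - 1))"
proof -
  have "i + j = (i - 1 + (j - 1)) + 2" using assms by simp
  then show ?thesis unfolding cofactor_def by (simp only: power_add) simp
qed

lemma improper_df_nonneg:
  assumes "improper_df F"
  shows "0 \<le> F t"
proof -
  have "mono F" using assms by (simp add: improper_df_def)
  then have "F (min t (-1)) \<le> F t" by (rule monoD) simp
  moreover have "F (min t (-1)) = 0"
    using assms by (simp add: improper_df_def)
  ultimately show ?thesis by simp
qed

lemma improper_df_tendsto_at_bot: "improper_df F \<Longrightarrow> (F \<longlongrightarrow> 0) at_bot"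
  by (rule tendsto_eventually)
    (auto simp: improper_df_def eventually_at_bot_linorder intro!: exI[of _ "-1"])

lemma improper_df_tendsto_F_inf:
  assumes F: "improper_df F"
  shows "(F \<longlongrightarrow> F_inf F) at_top"
proof -
  have mono: "F x \<le> F y" if "x \<le> y" for x y
    using F that by (auto simp: improper_df_def mono_def)
  have bdd: "bdd_above (range F)"
    using F by (auto simp: improper_df_def intro!: bdd_aboveI)
  have lim: "(F \<longlongrightarrow> (SUP t. F t)) at_top"
  proof (rule order_tendstoI)
    fix y assume "y < (SUP t. F t)"
    then obtain x where "y < F x" using less_cSUP_iff[of UNIV F y] bdd by auto
    then show "\<forall>\<^sub>F t in at_top. y < F t"
      unfolding eventually_at_top_linorder using mono by (meson less_le_trans)
  next
    fix y assume "(SUP t. F t) < y"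
    then show "\<forall>\<^sub>F t in at_top. F t < y"
      using cSUP_upper[OF _ bdd] by (auto intro!: always_eventually) (meson UNIV_I le_less_trans)
  qed
  moreover have "F_inf F = (SUP t. F t)"
    unfolding F_inf_def by (rule tendsto_Lim[OF _ lim]) simp
  ultimately show ?thesis by simp
qed

lemma improper_df_le_F_inf: "improper_df F \<Longrightarrow> F t \<le> F_inf F"
  by (rule tendsto_lowerbound[OF improper_df_tendsto_F_inf])
    (auto simp: improper_df_def mono_def eventually_at_top_linorder)

lemma
  assumes F: "improper_df F"
  shows finite_borel_measure_improper_df: "finite_borel_measure (interval_measure F)"
    and measure_improper_df_Iic: "measure (interval_measure F) {..x} = F x"
    and measure_improper_df_UNIV: "measure (interval_measure F) UNIV = F_inf F"
proof -
  have mono: "\<And>x y. x \<le> y \<Longrightarrow> F x \<le> F y" and cont: "\<And>a. continuous (at_right a) F"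
    using F by (auto simp: improper_df_def mono_def)
  note bot = improper_df_tendsto_at_bot[OF F] and top = improper_df_tendsto_F_inf[OF F]
  have nonneg: "0 \<le> F_inf F"
    using improper_df_nonneg[OF F] improper_df_le_F_inf[OF F] order_trans by blast
  show "finite_borel_measure (interval_measure F)"
    by (rule finite_borel_measure_interval_measure[OF mono cont bot top nonneg])
  show "measure (interval_measure F) {..x} = F x"
    by (rule measure_interval_measure_Iic[OF mono cont bot])
  show "measure (interval_measure F) UNIV = F_inf F"
    using interval_measure_UNIV[OF mono cont bot top nonneg] nonneg by (simp add: measure_def)
qed

lemma null_sets_improper_df_negative:
  assumes F: "improper_df F"
  shows "{..<0} \<in> null_sets (interval_measure F)"
proof -
  have "(\<Union>n::nat. {..- 1 / Suc n}) \<in> null_sets (interval_measure F)"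
  proof (rule null_sets_UN)
    fix n :: nat
    interpret finite_borel_measure "interval_measure F"
      by (rule finite_borel_measure_improper_df[OF F])
    have "emeasure (interval_measure F) {..- 1 / Suc n} = F (- 1 / Suc n)"
      using measure_improper_df_Iic[OF F] by (simp add: emeasure_eq_measure)
    also have "\<dots> = 0" using F by (simp add: improper_df_def)
    finally show "{..- 1 / Suc n} \<in> null_sets (interval_measure F)" by (simp add: null_sets_def)
  qed
  moreover have "(\<Union>n::nat. {..- 1 / Suc n}) = {..<0::real}"
  proof auto
    fix x :: real assume "x < 0"
    then obtain n :: nat where "1 / Suc n < - x"
      by (metis neg_0_less_iff_less nat_approx_posE)
    then show "\<exists>n::nat. x \<le> - (1 / (1 + real n))" by (auto intro!: exI[of _ n])
  qed (smt (verit) divide_pos_pos of_nat_0_le_iff)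
  ultimately show "{..<0} \<in> null_sets (interval_measure F)" by simp
qed

lemma LST_eq_atom_plus_integral_Ioi:
  assumes F: "improper_df F" and lam: "lam \<ge> 0"
  shows "LST F lam = F 0 + (\<integral>t. indicator {0<..} t * exp (- lam * t) \<partial>interval_measure F)"
proof -
  let ?M = "interval_measure F"
  interpret finite_borel_measure ?M by (rule finite_borel_measure_improper_df[OF F])
  have "AE t in ?M. 0 \<le> t"
    using AE_not_in[OF null_sets_improper_df_negative[OF F]] by (simp add: not_less)
  then have "LST F lam = (\<integral>t. indicator {..0} t + indicator {0<..} t * exp (- lam * t) \<partial>?M)"
    unfolding LST_def by (intro integral_cong_AE) (auto elim!: eventually_mono simp: indicator_def)
  also have "\<dots> = (\<integral>t. indicator {..0} t \<partial>?M) + (\<integral>t. indicator {0<..} t * exp (- lam * t) \<partial>?M)"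
  proof (rule Bochner_Integration.integral_add)
    show "integrable ?M (indicator {..0::real} :: real \<Rightarrow> real)"
      by (rule integrable_const_bound[where B=1]) auto
    show "integrable ?M (\<lambda>t. indicator {0<..} t * exp (- lam * t) :: real)"
      by (rule integrable_const_bound[where B=1])
        (use lam in \<open>auto simp: indicator_def\<close>)
  qed
  also have "(\<integral>t. indicator {..0} t \<partial>?M) = F 0"
    using measure_improper_df_Iic[OF F, of 0] by simp
  finally show ?thesis .
qed

lemma LST_eq_atom_if_no_increment:
  assumes F: "improper_df F" and lam: "lam \<ge> 0" and no_inc: "F_inf F - F 0 \<le> 0"
  shows "LST F lam = F 0"
proof -
  let ?M = "interval_measure F"
  interpret finite_borel_measure ?M by (rule finite_borel_measure_improper_df[OF F])
  have "measure ?M {0<..} = measure ?M (UNIV - {..0})"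
    by (simp add: Compl_eq_Diff_UNIV[symmetric] Compl_atMost)
  also have "\<dots> = F_inf F - F 0"
    by (simp add: finite_measure_Diff measure_improper_df_Iic[OF F] measure_improper_df_UNIV[OF F])
  finally have null: "{0<..} \<in> null_sets ?M"
    using no_inc measure_nonneg[of ?M "{0<..}"] by (simp add: null_sets_def emeasure_eq_measure)
  have "AE t in ?M. indicator {0<..} t * exp (- lam * t) = (0::real)"
    using AE_not_in[OF null] by eventually_elim (auto simp: indicator_def)
  then have "(\<integral>t. indicator {0<..} t * exp (- lam * t) \<partial>?M) = 0"
    by (rule integral_eq_zero_AE)
  then show ?thesis using LST_eq_atom_plus_integral_Ioi[OF F lam] by simp
qed

lemma improper_df_normalized_increment:
  assumes F: "improper_df F" and c: "F_inf F - F 0 > 0"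
  shows "improper_df (\<lambda>t. if t < 0 then 0 else (F t - F 0) / (F_inf F - F 0))"
    (is "improper_df ?G")
proof -
  define c where "c = F_inf F - F 0"
  have c0: "c > 0" using c by (simp add: c_def)
  have mono: "F x \<le> F y" if "x \<le> y" for x y
    using F that by (auto simp: improper_df_def mono_def)
  have "mono ?G"
    using mono[of 0] mono c0 by (auto simp: mono_def c_def[symmetric] divide_right_mono)
  moreover have "?G t \<le> 1" for t
    using improper_df_le_F_inf[OF F, of t] c0 by (simp add: c_def)
  moreover have "continuous (at_right a) ?G" for a
  proof (cases "a < 0")
    case True
    have "\<forall>\<^sub>F x in at_right a. 0 = ?G x"
      unfolding eventually_at_right[OF True] using True by (auto intro!: exI[of _ 0])
    then have "(?G \<longlongrightarrow> 0) (at_right a)"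
      by (rule tendsto_eventually[OF eventually_mono]) simp
    then show ?thesis using True by (simp add: continuous_within)
  next
    case False
    have "\<forall>\<^sub>F x in at_right a. (F x - F 0) / c = ?G x"
      using eventually_at_right_less[of a] by eventually_elim (use False in \<open>auto simp: c_def\<close>)
    moreover have "((\<lambda>x. (F x - F 0) / c) \<longlongrightarrow> (F a - F 0) / c) (at_right a)"
      using F c0 by (auto simp: improper_df_def continuous_within intro!: tendsto_intros)
    ultimately have "(?G \<longlongrightarrow> (F a - F 0) / c) (at_right a)"
      by (rule tendsto_cong[THEN iffD1])
    then show ?thesis using False by (simp add: continuous_within c_def)
  qed
  ultimately show ?thesis by (simp add: improper_df_def)
qed

text \<open>The Stieltjes measure of F restricted to (0,\<infinity>) is c times that of its normalized
  increment, by uniqueness of measures with equal distribution functions.\<close>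

lemma LST_normalized_increment:
  assumes F: "improper_df F" and lam: "lam \<ge> 0" and c: "F_inf F - F 0 > 0"
  shows "(F_inf F - F 0) * LST (\<lambda>t. if t < 0 then 0 else (F t - F 0) / (F_inf F - F 0)) lam
         = LST F lam - F 0"
proof -
  define c where "c = F_inf F - F 0"
  define G where "G = (\<lambda>t. if t < 0 then 0 else (F t - F 0) / c)"
  have c0: "c > 0" using c by (simp add: c_def)
  have G: "improper_df G"
    unfolding G_def c_def by (rule improper_df_normalized_increment[OF F c])
  let ?M = "interval_measure F"
  let ?N = "interval_measure G"
  interpret M: finite_borel_measure ?M by (rule finite_borel_measure_improper_df[OF F])
  interpret N: finite_borel_measure ?N by (rule finite_borel_measure_improper_df[OF G])
  define P where "P = density ?M (indicator {0<..})"
  define Q where "Q = density ?N (\<lambda>_. ennreal c)"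
  have "finite_borel_measure P"
    unfolding finite_borel_measure_def finite_borel_measure_axioms_def P_def
    by (auto intro!: M.finite_measure_restricted)
  moreover have "finite_borel_measure Q"
    unfolding finite_borel_measure_def finite_borel_measure_axioms_def Q_def
    by (auto intro!: finite_measureI simp: emeasure_density_const ennreal_mult_eq_top_iff)
  moreover have "cdf P = cdf Q"
  proof
    fix x :: real
    have "cdf P x = measure ?M ({0<..} \<inter> {..x})"
      unfolding cdf_def P_def by (rule measure_restricted) auto
    also have "\<dots> = (if x \<le> 0 then 0 else F x - F 0)"
    proof (cases "x \<le> 0")
      case False
      then have "{0<..} \<inter> {..x} = {0<..x}" by auto
      then show ?thesis
        using False F measure_interval_measure_Ioc[of 0 x F]
        by (auto simp: improper_df_def mono_def)
    qed (subgoal_tac "{0<..} \<inter> {..x} = {}", auto)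
    also have "\<dots> = c * G x"
      using c0 F by (auto simp: G_def improper_df_def)
    also have "\<dots> = cdf Q x"
      unfolding cdf_def Q_def using c0 measure_improper_df_Iic[OF G, of x]
      by (simp add: measure_density_const)
    finally show "cdf P x = cdf Q x" .
  qed
  ultimately have PQ: "P = Q" by (rule cdf_unique')
  have "P = density ?M (\<lambda>t. ennreal (indicator {0<..} t))"
    by (simp add: P_def ennreal_indicator)
  then have "(\<integral>t. indicator {0<..} t * exp (- lam * t) \<partial>?M) = (\<integral>t. exp (- lam * t) \<partial>P)"
    by (simp add: integral_density)
  also have "\<dots> = (\<integral>t. c *\<^sub>R exp (- lam * t) \<partial>?N)"
    unfolding PQ Q_def by (rule integral_density) (use c0 in auto)
  also have "\<dots> = c * LST G lam" by (simp add: LST_def)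
  finally show ?thesis
    using LST_eq_atom_plus_integral_Ioi[OF F lam] unfolding G_def c_def by simp
qed

lemma Kset_subset: "Kset N Fb j \<subseteq> {1..N}"
  and finite_Kset: "finite (Kset N Fb j)"
  unfolding Kset_def by (auto intro: finite_subset)

lemma kidx_in_Kset:
  assumes "i \<in> {1..card (Kset N Fb j)}"
  shows "kidx N Fb i j \<in> Kset N Fb j"
proof -
  have "i - 1 < length (sorted_list_of_set (Kset N Fb j))" using assms by auto
  then show ?thesis
    unfolding kidx_def using nth_mem finite_Kset set_sorted_list_of_set by metis
qed

lemma kidx_inj:
  assumes "i \<in> {1..card (Kset N Fb j)}" and "i' \<in> {1..card (Kset N Fb j)}"
    and "kidx N Fb i j = kidx N Fb i' j"
  shows "i = i'"
proof -
  have "i - 1 = i' - 1"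
    using nth_eq_iff_index_eq[OF distinct_sorted_list_of_set[of "Kset N Fb j"], of "i - 1" "i' - 1"]
      assms
    unfolding kidx_def by auto
  then show ?thesis using assms by auto
qed

lemma kidx_surj:
  assumes "k \<in> Kset N Fb j"
  obtains i where "i \<in> {1..card (Kset N Fb j)}" and "kidx N Fb i j = k"
proof -
  have "k \<in> set (sorted_list_of_set (Kset N Fb j))" using assms finite_Kset by simp
  then obtain n where "n < card (Kset N Fb j)" "sorted_list_of_set (Kset N Fb j) ! n = k"
    by (auto simp: in_set_conv_nth)
  then show ?thesis using that[of "Suc n"] by (simp add: kidx_def)
qed

lemma Lidx_add_card_le_Lidx:
  assumes "1 \<le> j" and "j < j'"
  shows "Lidx N Fb j + card (Kset N Fb j) \<le> Lidx N Fb j'"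
proof -
  have "(\<Sum>l\<in>insert j {1..<j}. card (Kset N Fb l)) \<le> (\<Sum>l\<in>{1..<j'}. card (Kset N Fb l))"
    by (rule sum_mono2) (use assms in auto)
  then show ?thesis using assms unfolding Lidx_def by simp
qed

lemma Lidx_add_card_le_Ltot:
  assumes "j \<in> {1..N}"
  shows "Lidx N Fb j + card (Kset N Fb j) \<le> Ltot N Fb"
proof -
  have "(\<Sum>l\<in>insert j {1..<j}. card (Kset N Fb l)) \<le> (\<Sum>l\<in>{1..N}. card (Kset N Fb l))"
    by (rule sum_mono2) (use assms in auto)
  then show ?thesis unfolding Lidx_def Ltot_def by simp
qed

lemma isL_bounds:
  assumes "isL N Fb r j i"
  shows "N < r" and "r \<le> Ltot N Fb"
  using assms Lidx_add_card_le_Ltot[of j N Fb] unfolding isL_def Lidx_def by auto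

lemma isL_unique:
  assumes "isL N Fb r j i" and "isL N Fb r j' i'"
  shows "j = j'" and "i = i'"
proof -
  have "\<not> j < j'" and "\<not> j' < j"
    using assms Lidx_add_card_le_Lidx[of j j' N Fb] Lidx_add_card_le_Lidx[of j' j N Fb]
    unfolding isL_def by auto
  then show "j = j'" by simp
  then show "i = i'" using assms unfolding isL_def by simp
qed

lemma isL_kidx_iff:
  assumes "j \<in> {1..N}" and i0: "i0 \<in> {1..card (Kset N Fb j)}"
  shows "(\<exists>i. isL N Fb r j i \<and> kidx N Fb i j = kidx N Fb i0 j) \<longleftrightarrow> r = Lidx N Fb j + i0"
  using assms kidx_inj[OF _ i0] unfolding isL_def by auto

lemma Gstar_isL:
  assumes "isL N Fb r j i"
  shows "Gstar N \<beta> Fb r lam = LST (Gfun N Fb i j) lam"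
proof -
  have "(SOME x. case x of (j, i) \<Rightarrow> isL N Fb r j i) = (j, i)"
    by (rule some_equality) (use assms isL_unique in auto)
  then show ?thesis using isL_bounds(1)[OF assms] unfolding Gstar_def by auto
qed

lemma Ment_top_right:
  assumes "j \<in> {1..N}" and "N < s"
  shows "Ment N \<alpha> p Fb j s
    = (if \<exists>i. isL N Fb s j i then (1 - \<alpha> j) * Tinf N Fb (s - Lidx N Fb j) j else 0)"
proof -
  have "\<not> isL N Fb j j' i" for j' i
    using isL_bounds(1)[of N Fb j j' i] assms(1) by auto
  then show ?thesis using assms by (auto simp: Ment_def)
qed

lemma Ment_bottom_left:
  assumes "isL N Fb r j i" and "k \<in> {1..N}"
  shows "Ment N \<alpha> p Fb r k = (if k = kidx N Fb i j then 1 else 0)"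
proof -
  have "(\<exists>j' i'. isL N Fb r j' i' \<and> k = kidx N Fb i' j') \<longleftrightarrow> k = kidx N Fb i j"
    using isL_unique assms(1) by blast
  then show ?thesis using isL_bounds(1)[OF assms(1)] unfolding Ment_def by auto
qed

lemma Ment_bottom_right:
  assumes "N < r" and "N < s"
  shows "Ment N \<alpha> p Fb r s = 0"
proof -
  have "kidx N Fb i j \<in> {1..N}" if "isL N Fb r j i" for j i
    using kidx_in_Kset[of i N Fb j] Kset_subset[of N Fb j] that unfolding isL_def by auto
  then have "\<not> (\<exists>j i. isL N Fb r j i \<and> s = kidx N Fb i j)"
    using assms(2) by fastforce
  then show ?thesis using assms unfolding Ment_def by auto
qed

lemma Ment_Gstar_Ment:
  assumes j: "j \<in> {1..N}" and k: "k \<in> {1..N}" and r: "N < r"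
  shows "Ment N \<alpha> p Fb j r * Gstar N \<beta> Fb r lam * Ment N \<alpha> p Fb r k
    = (if \<exists>i. isL N Fb r j i \<and> kidx N Fb i j = k
       then (1 - \<alpha> j) * Tinf N Fb (r - Lidx N Fb j) j * LST (Gfun N Fb (r - Lidx N Fb j) j) lam
       else 0)"
proof (cases "\<exists>i. isL N Fb r j i")
  case True
  then obtain i where L: "isL N Fb r j i" ..
  then have i: "r - Lidx N Fb j = i" by (simp add: isL_def)
  have "Ment N \<alpha> p Fb j r = (1 - \<alpha> j) * Tinf N Fb i j"
    using Ment_top_right[OF j r] L i by auto
  moreover have "(\<exists>i'. isL N Fb r j i' \<and> kidx N Fb i' j = k) \<longleftrightarrow> k = kidx N Fb i j"
    using isL_unique(2)[OF L] L by blast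
  ultimately show ?thesis
    using Gstar_isL[OF L] Ment_bottom_left[OF L k] i by simp
next
  case False
  then show ?thesis using Ment_top_right[OF j r] by simp
qed

lemma sum_Ment_Gstar_Ment:
  assumes j: "j \<in> {1..N}" and k: "k \<in> {1..N}" and F: "improper_df (Fb j k)" and lam: "lam \<ge> 0"
  shows "(\<Sum>t\<in>{N..<Ltot N Fb}. Ment N \<alpha> p Fb j (t + 1) * Gstar N \<beta> Fb (t + 1) lam
            * Ment N \<alpha> p Fb (t + 1) k)
       = (1 - \<alpha> j) * (LST (Fb j k) lam - Fb j k 0)"
proof -
  note chain_term = Ment_Gstar_Ment[OF j k, where \<alpha> = \<alpha> and p = p and \<beta> = \<beta> and lam = lam]
  show ?thesis
  proof (cases "k \<in> Kset N Fb j")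
    case True
    then obtain i0 where i0: "i0 \<in> {1..card (Kset N Fb j)}" and k_eq: "kidx N Fb i0 j = k"
      by (rule kidx_surj)
    define t0 where "t0 = Lidx N Fb j + i0 - 1"
    have t0: "t0 \<in> {N..<Ltot N Fb}" and t0_eq: "t0 + 1 = Lidx N Fb j + i0"
      using isL_bounds[of N Fb "Lidx N Fb j + i0" j i0] j i0 unfolding t0_def isL_def by auto
    have "(\<Sum>t\<in>{N..<Ltot N Fb}. Ment N \<alpha> p Fb j (t + 1) * Gstar N \<beta> Fb (t + 1) lam
            * Ment N \<alpha> p Fb (t + 1) k)
        = (\<Sum>t\<in>{N..<Ltot N Fb}. if t = t0 then (1 - \<alpha> j) * Tinf N Fb i0 j * LST (Gfun N Fb i0 j) lam
            else 0)"
    proof (rule sum.cong[OF refl])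
      fix t assume t: "t \<in> {N..<Ltot N Fb}"
      have "(\<exists>i. isL N Fb (t + 1) j i \<and> kidx N Fb i j = k) \<longleftrightarrow> t = t0"
        using isL_kidx_iff[OF j i0, of "t + 1"] k_eq t0_eq by auto
      moreover have "t + 1 - Lidx N Fb j = i0" if "t = t0"
        using t0_eq that by simp
      ultimately show "Ment N \<alpha> p Fb j (t + 1) * Gstar N \<beta> Fb (t + 1) lam * Ment N \<alpha> p Fb (t + 1) k
          = (if t = t0 then (1 - \<alpha> j) * Tinf N Fb i0 j * LST (Gfun N Fb i0 j) lam else 0)"
        using chain_term[of "t + 1"] t by auto
    qed
    also have "\<dots> = (1 - \<alpha> j) * (Tinf N Fb i0 j * LST (Gfun N Fb i0 j) lam)"
      using t0 by simp
    also have "Tinf N Fb i0 j * LST (Gfun N Fb i0 j) lam = LST (Fb j k) lam - Fb j k 0"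
      using LST_normalized_increment[OF F lam] True
      unfolding Tinf_def Gfun_def Tfun_def Kset_def k_eq by simp
    finally show ?thesis .
  next
    case False
    then have no_path: "\<not> (\<exists>i. isL N Fb r j i \<and> kidx N Fb i j = k)" for r
      using kidx_in_Kset[of _ N Fb j] by (auto simp: isL_def)
    have "(\<Sum>t\<in>{N..<Ltot N Fb}. Ment N \<alpha> p Fb j (t + 1) * Gstar N \<beta> Fb (t + 1) lam
            * Ment N \<alpha> p Fb (t + 1) k) = 0"
      by (rule sum.neutral) (use chain_term no_path in auto)
    moreover have "LST (Fb j k) lam = Fb j k 0"
      using LST_eq_atom_if_no_increment[OF F lam] False j k by (simp add: Kset_def)
    ultimately show ?thesis by simp
  qed
qed

lemma IminusH_carrier: "IminusH N \<alpha> \<beta> p Fb lam \<in> carrier_mat (Ltot N Fb) (Ltot N Fb)"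
  by (simp add: IminusH_def)

lemma N_le_Ltot: "N \<le> Ltot N Fb"
  by (simp add: Ltot_def)

lemma IminusH_index:
  assumes "r < Ltot N Fb" and "s < Ltot N Fb"
  shows "IminusH N \<alpha> \<beta> p Fb lam $$ (r, s)
    = (if r = s then 1 else 0) - Gstar N \<beta> Fb (r + 1) lam * Ment N \<alpha> p Fb (r + 1) (s + 1)"
  using assms by (simp add: IminusH_def)

lemma IminusH_bottom_right:
  assumes "N \<le> r" "r < Ltot N Fb" "N \<le> s" "s < Ltot N Fb"
  shows "IminusH N \<alpha> \<beta> p Fb lam $$ (r, s) = (if r = s then 1 else 0)"
  using assms by (simp add: IminusH_index Ment_bottom_right)

lemma IminusH_top_right:
  assumes "a < N" and "N \<le> t" and "t < Ltot N Fb"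
  shows "IminusH N \<alpha> \<beta> p Fb lam $$ (a, t)
    = - Gexp_star \<beta> (a + 1) lam * Ment N \<alpha> p Fb (a + 1) (t + 1)"
  using assms N_le_Ltot[of N Fb] by (simp add: IminusH_index Gstar_def)

lemma sum_IminusH_top_right_bottom_left:
  assumes a: "a < N" and b: "b < N" and F: "improper_df (Fb (a + 1) (b + 1))" and lam: "lam \<ge> 0"
  shows "(\<Sum>t\<in>{N..<Ltot N Fb}. IminusH N \<alpha> \<beta> p Fb lam $$ (a, t) * IminusH N \<alpha> \<beta> p Fb lam $$ (t, b))
    = Gexp_star \<beta> (a + 1) lam * (1 - \<alpha> (a + 1))
      * (LST (Fb (a + 1) (b + 1)) lam - Fb (a + 1) (b + 1) 0)"
proof -
  have j: "a + 1 \<in> {1..N}" and k: "b + 1 \<in> {1..N}" using a b by auto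
  have "(\<Sum>t\<in>{N..<Ltot N Fb}. IminusH N \<alpha> \<beta> p Fb lam $$ (a, t) * IminusH N \<alpha> \<beta> p Fb lam $$ (t, b))
      = Gexp_star \<beta> (a + 1) lam * (\<Sum>t\<in>{N..<Ltot N Fb}. Ment N \<alpha> p Fb (a + 1) (t + 1)
          * Gstar N \<beta> Fb (t + 1) lam * Ment N \<alpha> p Fb (t + 1) (b + 1))"
    unfolding sum_distrib_left using a b
    by (intro sum.cong) (auto simp: IminusH_top_right IminusH_index)
  then show ?thesis
    using sum_Ment_Gstar_Ment[where Fb = Fb, OF j k F lam] by simp
qed

lemma schur_compl_IminusH:
  assumes Fb_df: "\<And>i j. i \<in> {1..N} \<Longrightarrow> j \<in> {1..N} \<Longrightarrow> improper_df (Fb i j)"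
    and lam: "lam \<ge> 0"
  shows "schur_compl (IminusH N \<alpha> \<beta> p Fb lam) N = IminusD N \<alpha> \<beta> p Fb lam"
proof (rule eq_matI)
  let ?X = "IminusH N \<alpha> \<beta> p Fb lam"
  fix a b assume "a < dim_row (IminusD N \<alpha> \<beta> p Fb lam)" "b < dim_col (IminusD N \<alpha> \<beta> p Fb lam)"
  then have a: "a < N" and b: "b < N" by (auto simp: IminusD_def)
  define j where "j = a + 1"
  define k where "k = b + 1"
  define e where "e = (if a = b then \<alpha> j * fd p j else 0)"
  have "dim_row ?X = Ltot N Fb" by (simp add: IminusH_def)
  then have schur: "schur_compl ?X N $$ (a, b)
      = ?X $$ (a, b) - (\<Sum>t\<in>{N..<Ltot N Fb}. ?X $$ (a, t) * ?X $$ (t, b))"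
    using a b by (simp add: schur_compl_def)
  have sum: "(\<Sum>t\<in>{N..<Ltot N Fb}. ?X $$ (a, t) * ?X $$ (t, b))
      = Gexp_star \<beta> j lam * (1 - \<alpha> j) * (LST (Fb j k) lam - Fb j k 0)"
    unfolding j_def k_def using a b Fb_df lam by (intro sum_IminusH_top_right_bottom_left) auto
  have X: "?X $$ (a, b)
      = (if a = b then 1 else 0) - Gexp_star \<beta> j lam * (e + (1 - \<alpha> j) * Fb j k 0)"
    using a b N_le_Ltot[of N Fb] by (simp add: IminusH_index Gstar_def Ment_def j_def k_def e_def)
  have Y: "IminusD N \<alpha> \<beta> p Fb lam $$ (a, b) = (if a = b then 1 else 0) - Dent \<alpha> \<beta> p Fb lam j k"
    using a b by (simp add: IminusD_def j_def k_def)
  have D: "Dent \<alpha> \<beta> p Fb lam j k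
      = Gexp_star \<beta> j lam * e + (1 - \<alpha> j) * Gexp_star \<beta> j lam * LST (Fb j k) lam"
    by (simp add: Dent_def e_def j_def k_def)
  show "schur_compl ?X N $$ (a, b) = IminusD N \<alpha> \<beta> p Fb lam $$ (a, b)"
    unfolding schur X sum Y D by (simp add: algebra_simps)
qed (auto simp: schur_compl_def IminusD_def)

lemma det_IminusH:
  assumes Fb_df: "\<And>i j. i \<in> {1..N} \<Longrightarrow> j \<in> {1..N} \<Longrightarrow> improper_df (Fb i j)"
    and lam: "lam \<ge> 0"
  shows "det (IminusH N \<alpha> \<beta> p Fb lam) = det (IminusD N \<alpha> \<beta> p Fb lam)"
proof -
  have "det (IminusH N \<alpha> \<beta> p Fb lam) = det (schur_compl (IminusH N \<alpha> \<beta> p Fb lam) N)"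
    by (rule det_schur_compl[OF IminusH_carrier N_le_Ltot]) (simp add: IminusH_bottom_right)
  moreover have "schur_compl (IminusH N \<alpha> \<beta> p Fb lam) N = IminusD N \<alpha> \<beta> p Fb lam"
    using Fb_df lam by (rule schur_compl_IminusH)
  ultimately show ?thesis by simp
qed

lemma cofactor_IminusH:
  assumes Fb_df: "\<And>i j. i \<in> {1..N} \<Longrightarrow> j \<in> {1..N} \<Longrightarrow> improper_df (Fb i j)"
    and lam: "lam \<ge> 0" and a: "a < N" and b: "b < N"
  shows "cofactor (IminusH N \<alpha> \<beta> p Fb lam) a b = cofactor (IminusD N \<alpha> \<beta> p Fb lam) a b"
proof -
  have "cofactor (IminusH N \<alpha> \<beta> p Fb lam) a b
      = cofactor (schur_compl (IminusH N \<alpha> \<beta> p Fb lam) N) a b"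
    by (rule cofactor_schur_compl[OF IminusH_carrier N_le_Ltot _ a b]) (simp add: IminusH_bottom_right)
  moreover have "schur_compl (IminusH N \<alpha> \<beta> p Fb lam) N = IminusD N \<alpha> \<beta> p Fb lam"
    using Fb_df lam by (rule schur_compl_IminusH)
  ultimately show ?thesis by simp
qed

lemma cofactor_IminusH_isL:
  assumes L: "isL N Fb (s + 1) j i" and k: "k \<in> {1..N}"
  shows "cofactor (IminusH N \<alpha> \<beta> p Fb lam) s (k - 1)
    = Gexp_star \<beta> j lam * Ment N \<alpha> p Fb j (s + 1)
      * cofactor (IminusH N \<alpha> \<beta> p Fb lam) (j - 1) (k - 1)"
proof -
  let ?X = "IminusH N \<alpha> \<beta> p Fb lam"
  have s: "N \<le> s" "s < Ltot N Fb" and j: "j \<in> {1..N}"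
    using isL_bounds[OF L] L by (auto simp: isL_def)
  have col: "?X $$ (r, s) = (if r = s then 1 else 0)" if "r < Ltot N Fb" "r \<noteq> j - 1" for r
  proof (cases "N \<le> r")
    case True
    then show ?thesis using that s by (simp add: IminusH_bottom_right)
  next
    case False
    have "\<not> isL N Fb (s + 1) (r + 1) i'" for i'
      using isL_unique(1)[OF L, of "r + 1" i'] that j by auto
    then show ?thesis
      using False s j by (simp add: IminusH_top_right Ment_top_right)
  qed
  have "cofactor ?X s (k - 1) = - ?X $$ (j - 1, s) * cofactor ?X (j - 1) (k - 1)"
    by (rule cofactor_unit_col[OF IminusH_carrier _ _ _ _ _ col]) (use s j k in auto)
  moreover have "?X $$ (j - 1, s)
      = - Gexp_star \<beta> (j - 1 + 1) lam * Ment N \<alpha> p Fb (j - 1 + 1) (s + 1)"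
    by (rule IminusH_top_right) (use s j in auto)
  ultimately show ?thesis using j by simp
qed

theorem lemma2:
  fixes N :: nat and \<alpha> \<beta> :: "nat \<Rightarrow> real" and p :: "nat \<Rightarrow> nat pmf"
    and Fb :: "nat \<Rightarrow> nat \<Rightarrow> real \<Rightarrow> real" and lam :: real
  assumes beta_pos: "\<And>k. k \<in> {1..N} \<Longrightarrow> \<beta> k > 0"
    and alpha: "\<And>k. k \<in> {1..N} \<Longrightarrow> 0 \<le> \<alpha> k \<and> \<alpha> k < 1"
    and mean_fin: "\<And>k. k \<in> {1..N} \<Longrightarrow> integrable (measure_pmf (p k)) real"
    and Fb_df: "\<And>i j. i \<in> {1..N} \<Longrightarrow> j \<in> {1..N} \<Longrightarrow> improper_df (Fb i j)"
    and lam: "lam \<ge> 0"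
  shows "det (IminusH N \<alpha> \<beta> p Fb lam) = det (IminusD N \<alpha> \<beta> p Fb lam)
    \<and> (\<forall>j\<in>{1..N}. \<forall>k\<in>{1..N}.
         det (mat_delete (IminusH N \<alpha> \<beta> p Fb lam) (j - 1) (k - 1))
       = det (mat_delete (IminusD N \<alpha> \<beta> p Fb lam) (j - 1) (k - 1)))
    \<and> (\<forall>j\<in>{1..N}. \<forall>k\<in>{1..N}. \<forall>i\<in>{1..card (Kset N Fb j)}.
         (-1) ^ (Lidx N Fb j + i + k)
           * det (mat_delete (IminusH N \<alpha> \<beta> p Fb lam) (Lidx N Fb j + i - 1) (k - 1))
       = (-1) ^ (j + k) * Ment N \<alpha> p Fb j (Lidx N Fb j + i) * Gexp_star \<beta> j lam
           * det (mat_delete (IminusD N \<alpha> \<beta> p Fb lam) (j - 1) (k - 1)))"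
proof (intro conjI ballI)
  let ?X = "IminusH N \<alpha> \<beta> p Fb lam" and ?Y = "IminusD N \<alpha> \<beta> p Fb lam"
  show "det ?X = det ?Y"
    by (rule det_IminusH[OF Fb_df lam])
  fix j k assume j: "j \<in> {1..N}" and k: "k \<in> {1..N}"
  have cof: "cofactor ?X (j - 1) (k - 1) = cofactor ?Y (j - 1) (k - 1)"
    using cofactor_IminusH[OF Fb_df lam] j k by auto
  then show "det (mat_delete ?X (j - 1) (k - 1)) = det (mat_delete ?Y (j - 1) (k - 1))"
    using cofactor_pred_pred[of j k ?X] cofactor_pred_pred[of j k ?Y] j k by simp
  fix i assume i: "i \<in> {1..card (Kset N Fb j)}"
  have "isL N Fb (Lidx N Fb j + i - 1 + 1) j i"
    using j i by (auto simp: isL_def)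
  from cofactor_IminusH_isL[OF this k, of \<alpha> \<beta> p lam]
  have "cofactor ?X (Lidx N Fb j + i - 1) (k - 1)
      = Gexp_star \<beta> j lam * Ment N \<alpha> p Fb j (Lidx N Fb j + i) * cofactor ?Y (j - 1) (k - 1)"
    using cof i by simp
  then show "(-1) ^ (Lidx N Fb j + i + k) * det (mat_delete ?X (Lidx N Fb j + i - 1) (k - 1))
      = (-1) ^ (j + k) * Ment N \<alpha> p Fb j (Lidx N Fb j + i) * Gexp_star \<beta> j lam
        * det (mat_delete ?Y (j - 1) (k - 1))"
    using cofactor_pred_pred[of "Lidx N Fb j + i" k ?X] cofactor_pred_pred[of j k ?Y] i j k
    by (simp add: ac_simps)
qed

end
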